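(* There is a universal constant $C>0$ such that, in the standing setting, for every $N\in\mathbb{N}$ and $\varepsilon>0$, $$\mathcal{H}^{\rm int}(\varepsilon,R_N[B_{\mathcal{H}_K}],C(\Omega))\ge\sup\Big\{\tfrac12\mathcal{E}(\delta,\{\lambda_i\}_{i=1}^N)-C\ln\tfrac1D\ :\ D>0,\ \delta>0,\ \big(\nu(\Omega)^{1/2}N^{1/2}\varepsilon+\sigma_1D^{1/2}\big)^2\le\sum_{i=1}^N\min\{\lambda_i,\delta\}\Big\},$$ where $\sigma_1=\sqrt{\lambda_1}$.
   Context: Standing setting: $\Omega\subseteq\mathbb{R}^n$ compact, $\nu$ a finite Borel measure on $\Omega$ (total mass $\nu(\Omega)$), $K:\Omega\times\Omega\to\mathbb{R}$ continuous, symmetric, positive semidefinite; $O_K[\phi](x)=\int_\Omega K(x,y)\phi(y)\,d\nu(y)$ on $L_2(\nu)$, with an orthonormal basis $\{\phi_i\}$ of $L_2(\nu)$ of continuous eigenfunctions, $O_K\phi_i=\lambda_i\phi_i$, $\lambda_1\ge\lambda_2\ge\dots>0$, $K(x,y)=\sum_i\lambda_i\phi_i(x)\phi_i(y)$ uniformly. $\mathcal{H}_K$ is the RKHS of $K$, equal to $\{\sum a_i\phi_i:\sum a_i^2/\lambda_i<\infty\}$ with $\langle\sum a_i\phi_i,\sum b_i\phi_i\rangle_{\mathcal{H}_K}=\sum a_ib_i/\lambda_i$; $B_X$ is the open unit ball of $X$; $C(\Omega)$ has the sup norm. $R_N[f]=\sum_{i=1}^N\langle f,\phi_i\rangle_{L_2(\nu)}\phi_i$,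 $R_N[B_{\mathcal{H}_K}]=\{R_N[f]:f\in B_{\mathcal{H}_K}\}$. $\mathcal{H}^{\rm int}(\varepsilon,A,X)$ is the natural log of the minimal cardinality of $C\subseteq A$ with $A\subseteq\bigcup_{c\in C}(c+\varepsilon B_X)$. $\mathcal{E}(\delta,\{\lambda_i\}_{i=1}^N)=\sum_{i\le N,\lambda_i>\delta}\ln(\lambda_i/\delta)$. *)

theory Defs
  imports "HOL-Analysis.Analysis"
begin

text \<open>Points of R^n are encoded as functions nat => real vanishing at all indices >= n,
  so that a single constant can be quantified uniformly over all dimensions n.
  On this subspace the product topology of nat => real is the Euclidean topology.\<close>

definition euclid_n :: "nat \<Rightarrow> (nat \<Rightarrow> real) set" where
  "euclid_n n = {x. \<forall>i\<ge>n. x i = 0}"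

text \<open>Standing setting. Indices are shifted: phi 0, lam 0 correspond to phi_1, lambda_1.\<close>

definition standing_setting ::
  "nat \<Rightarrow> (nat \<Rightarrow> real) set \<Rightarrow> (nat \<Rightarrow> real) measure \<Rightarrow>
   ((nat \<Rightarrow> real) \<Rightarrow> (nat \<Rightarrow> real) \<Rightarrow> real) \<Rightarrow>
   (nat \<Rightarrow> (nat \<Rightarrow> real) \<Rightarrow> real) \<Rightarrow> (nat \<Rightarrow> real) \<Rightarrow> bool" where
  "standing_setting n \<Omega> \<nu> K \<phi> lam \<longleftrightarrow>
     \<Omega> \<subseteq> euclid_n n \<and> compact \<Omega> \<and>
     sets \<nu> = sets (restrict_space borel \<Omega>) \<and> finite_measure \<nu> \<and>
     continuous_on (\<Omega> \<times> \<Omega>) (\<lambda>(x, y). K x y) \<and>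
     (\<forall>x\<in>\<Omega>. \<forall>y\<in>\<Omega>. K x y = K y x) \<and>
     (\<forall>(m::nat) (xs::nat \<Rightarrow> nat \<Rightarrow> real) (c::nat \<Rightarrow> real).
        (\<forall>i<m. xs i \<in> \<Omega>) \<longrightarrow> 0 \<le> (\<Sum>i<m. \<Sum>j<m. c i * c j * K (xs i) (xs j))) \<and>
     \<comment> \<open>continuous eigenfunctions forming an orthonormal basis of L2(nu)\<close>
     (\<forall>i. continuous_on \<Omega> (\<phi> i) \<and> \<phi> i \<in> borel_measurable \<nu> \<and>
          integrable \<nu> (\<lambda>x. (\<phi> i x)\<^sup>2)) \<and>
     (\<forall>i j. (LINT x|\<nu>. \<phi> i x * \<phi> j x) = (if i = j then 1 else 0)) \<and>
     (\<forall>f. f \<in> borel_measurable \<nu> \<and> integrable \<nu> (\<lambda>x. (f x)\<^sup>2) \<and>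
          (\<forall>i. (LINT x|\<nu>. f x * \<phi> i x) = 0) \<longrightarrow> (AE x in \<nu>. f x = 0)) \<and>
     \<comment> \<open>O_K phi_i = lambda_i phi_i in L2(nu)\<close>
     (\<forall>i. AE x in \<nu>. (LINT y|\<nu>. K x y * \<phi> i y) = lam i * \<phi> i x) \<and>
     (\<forall>i j. i \<le> j \<longrightarrow> lam j \<le> lam i) \<and> (\<forall>i. 0 < lam i) \<and>
     \<comment> \<open>Mercer expansion, uniformly on Omega x Omega\<close>
     uniform_limit (\<Omega> \<times> \<Omega>) (\<lambda>m (x, y). \<Sum>i<m. lam i * \<phi> i x * \<phi> i y)
        (\<lambda>(x, y). K x y) sequentially"

definition rkhs_ball :: "(nat \<Rightarrow> (nat \<Rightarrow> real) \<Rightarrow> real) \<Rightarrow> (nat \<Rightarrow> real) \<Rightarrow>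
    ((nat \<Rightarrow> real) \<Rightarrow> real) set" where
  "rkhs_ball \<phi> lam = {f. \<exists>a. summable (\<lambda>i. (a i)\<^sup>2 / lam i) \<and>
       (\<Sum>i. (a i)\<^sup>2 / lam i) < 1 \<and> f = (\<lambda>x. \<Sum>i. a i * \<phi> i x)}"

definition proj_N :: "(nat \<Rightarrow> real) measure \<Rightarrow> (nat \<Rightarrow> (nat \<Rightarrow> real) \<Rightarrow> real) \<Rightarrow> nat \<Rightarrow>
    ((nat \<Rightarrow> real) \<Rightarrow> real) \<Rightarrow> ((nat \<Rightarrow> real) \<Rightarrow> real)" where
  "proj_N \<nu> \<phi> N f = (\<lambda>x. \<Sum>i<N. (LINT y|\<nu>. f y * \<phi> i y) * \<phi> i x)"

definition sup_cover :: "'a set \<Rightarrow> real \<Rightarrow> ('a \<Rightarrow> real) set \<Rightarrow> ('a \<Rightarrow> real) set \<Rightarrow> bool" where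
  "sup_cover \<Omega> \<epsilon> A C \<longleftrightarrow> C \<subseteq> A \<and>
     A \<subseteq> (\<Union>c\<in>C. {f. (SUP x\<in>\<Omega>. \<bar>f x - c x\<bar>) < \<epsilon>})"

definition int_entropy :: "real \<Rightarrow> ('a \<Rightarrow> real) set \<Rightarrow> 'a set \<Rightarrow> ereal" where
  "int_entropy \<epsilon> A \<Omega> =
     (if \<exists>C. finite C \<and> sup_cover \<Omega> \<epsilon> A C
      then ereal (ln (real (LEAST n. \<exists>C. finite C \<and> sup_cover \<Omega> \<epsilon> A C \<and> card C = n)))
      else \<infinity>)"

definition eig_entropy :: "real \<Rightarrow> (nat \<Rightarrow> real) \<Rightarrow> nat \<Rightarrow> real" where
  "eig_entropy \<delta> lam N = (\<Sum>i\<in>{i. i < N \<and> lam i > \<delta>}. ln (lam i / \<delta>))"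

end

(*
  Let C be a finite sup-norm epsilon-net of R_N[B_{H_K}] and put t = epsilon^2 nu(Omega).
  For h in the span of phi_1..phi_N we have sum of squared coefficients = ||h||^2_{L2}
  <= nu(Omega) ||h||^2_sup, so the coefficient vectors of C form a Euclidean net of radius
  sqrt t for the ellipsoid {sum a_i^2 / lambda_i < 1} in the coordinates with lambda_i > t.
  Every such ball is an affine image of the ellipsoid with volume ratio
  prod sqrt (t / lambda_i), so ln |C| >= E(t) / 2.  Lowering the threshold from delta to t
  gains at least D in E (term by term from ln x >= 1 - 1/x, summed with the hypothesis
  on D), and -ln (1/D) <= D, so the theorem holds with constant 1/2.
*)

theory Submission
  imports Defs
begin

interpretation lborel_product: product_sigma_finite "\<lambda>_::nat. lborel :: real measure" ..

lemma emeasure_lborel_affine_vimage: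
  fixes s u :: real
  assumes s: "s > 0" and A: "A \<in> sets borel"
  shows "ennreal s * emeasure lborel ((\<lambda>x. u + s * x) -` A) = emeasure lborel A"
proof -
  have "emeasure lborel A
      = emeasure (density (distr lborel borel (\<lambda>x. u + s * x)) (\<lambda>_. ennreal \<bar>s\<bar>)) A"
    using lborel_real_affine[of s u] s by simp
  then show ?thesis
    using A s by (simp add: emeasure_density_const emeasure_distr)
qed

lemma emeasure_PiM_affine_vimage:
  fixes J :: "nat set" and s u :: "nat \<Rightarrow> real"
  defines "P \<equiv> PiM J (\<lambda>_. lborel)" and "T \<equiv> \<lambda>a. \<lambda>i\<in>J. u i + s i * a i"
  assumes J: "finite J" and s: "\<And>i. i \<in> J \<Longrightarrow> s i > 0" and X: "X \<in> sets P"
  shows "ennreal (\<Prod>i\<in>J. s i) * emeasure P (T -` X \<inter> space P) = emeasure P X"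
proof -
  have T: "T \<in> measurable P P"
    unfolding P_def T_def by (intro measurable_restrict) measurable
  have scaled: "density (distr P P T) (\<lambda>_. ennreal (\<Prod>i\<in>J. s i)) = P"
  proof (rule lborel_product.PiM_eqI[OF J, folded P_def])
    fix A :: "nat \<Rightarrow> real set" assume A: "\<And>i. i \<in> J \<Longrightarrow> A i \<in> sets lborel"
    have box: "T -` Pi\<^sub>E J A \<inter> space P = Pi\<^sub>E J (\<lambda>i. (\<lambda>x. u i + s i * x) -` A i)"
      unfolding P_def T_def by (auto simp: space_PiM PiE_iff)
    have vimage: "(\<lambda>x. u i + s i * x) -` A i \<in> sets borel" if "i \<in> J" for i
      using measurable_sets[of "\<lambda>x. u i + s i * x" borel borel "A i"] A[OF that] by simp
    have "Pi\<^sub>E J A \<in> sets P"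
      unfolding P_def using A J by (intro sets_PiM_I_finite) auto
    then have "emeasure (density (distr P P T) (\<lambda>_. ennreal (\<Prod>i\<in>J. s i))) (Pi\<^sub>E J A)
        = ennreal (\<Prod>i\<in>J. s i) * emeasure P (Pi\<^sub>E J (\<lambda>i. (\<lambda>x. u i + s i * x) -` A i))"
      using T by (simp add: emeasure_density_const emeasure_distr box)
    also have "\<dots> = (\<Prod>i\<in>J. ennreal (s i) * emeasure lborel ((\<lambda>x. u i + s i * x) -` A i))"
      using J vimage s unfolding P_def
      by (subst lborel_product.emeasure_PiM) (auto simp: prod_ennreal less_imp_le prod.distrib)
    also have "\<dots> = (\<Prod>i\<in>J. emeasure lborel (A i))"
      using A s by (intro prod.cong refl emeasure_lborel_affine_vimage) auto
    finally show "emeasure (density (distr P P T) (\<lambda>_. ennreal (\<Prod>i\<in>J. s i))) (Pi\<^sub>E J A)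
        = (\<Prod>i\<in>J. emeasure lborel (A i))" .
  qed simp
  have "emeasure P X = emeasure (density (distr P P T) (\<lambda>_. ennreal (\<Prod>i\<in>J. s i))) X"
    by (simp add: scaled)
  then show ?thesis
    using X T by (simp add: emeasure_density_const emeasure_distr)
qed

lemma covering_number_ge_measure_ratio:
  fixes c :: real
  assumes B: "finite B" and cover: "E \<subseteq> (\<Union>b\<in>B. F b)"
    and F: "\<And>b. b \<in> B \<Longrightarrow> F b \<in> sets M"
    and ratio: "\<And>b. b \<in> B \<Longrightarrow> emeasure M (F b) \<le> ennreal c * emeasure M E"
    and c: "c \<ge> 0" and E_pos: "0 < emeasure M E" and E_fin: "emeasure M E < \<infinity>"
  shows "1 \<le> real (card B) * c"
proof -
  obtain m where m: "emeasure M E = ennreal m" "m > 0"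
    using E_pos E_fin by (cases "emeasure M E") auto
  have "emeasure M E \<le> emeasure M (\<Union>b\<in>B. F b)"
    using cover F B by (intro emeasure_mono) auto
  also have "\<dots> \<le> (\<Sum>b\<in>B. emeasure M (F b))"
    using F B by (intro emeasure_subadditive_finite) auto
  also have "\<dots> \<le> (\<Sum>b\<in>B. ennreal c * emeasure M E)"
    using ratio by (rule sum_mono)
  finally have "ennreal m \<le> ennreal (real (card B) * c * m)"
    using m c by (simp add: ennreal_mult ennreal_of_nat_eq_real_of_nat mult.assoc)
  then have "m \<le> real (card B) * c * m"
    using m c by (simp add: ennreal_le_iff)
  then show ?thesis using m by simp
qed

definition ellipsoid :: "nat set \<Rightarrow> (nat \<Rightarrow> real) \<Rightarrow> (nat \<Rightarrow> real) set" where
  "ellipsoid J lam = {a \<in> \<Pi>\<^sub>E i\<in>J. UNIV. (\<Sum>i\<in>J. (a i)\<^sup>2 / lam i) < 1}"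

lemma ellipsoid_in_sets: "ellipsoid J lam \<in> sets (PiM J (\<lambda>_. lborel))"
proof -
  have "ellipsoid J lam = {a \<in> space (PiM J (\<lambda>_. lborel)). (\<Sum>i\<in>J. (a i)\<^sup>2 / lam i) < 1}"
    by (simp add: ellipsoid_def space_PiM)
  then show ?thesis by simp
qed

lemma emeasure_ellipsoid_pos:
  assumes J: "finite J" and lam: "\<And>i. i \<in> J \<Longrightarrow> lam i > 0"
  shows "0 < emeasure (PiM J (\<lambda>_. lborel)) (ellipsoid J lam)"
proof -
  define r where "r i = sqrt (lam i / (real (card J) + 1))" for i
  have r: "r i > 0" if "i \<in> J" for i using lam[OF that] by (simp add: r_def)
  have box: "(\<Pi>\<^sub>E i\<in>J. {- r i<..<r i}) \<subseteq> ellipsoid J lam"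
  proof
    fix a assume a: "a \<in> (\<Pi>\<^sub>E i\<in>J. {- r i<..<r i})"
    have "(\<Sum>i\<in>J. (a i)\<^sup>2 / lam i) \<le> (\<Sum>i\<in>J. 1 / (real (card J) + 1))"
    proof (rule sum_mono)
      fix i assume i: "i \<in> J"
      then have "\<bar>a i\<bar> < r i" using a by (auto simp: PiE_iff abs_less_iff)
      then have "(a i)\<^sup>2 < (r i)\<^sup>2"
        by (metis abs_ge_zero power2_abs power_strict_mono zero_less_numeral)
      also have "(r i)\<^sup>2 = lam i / (real (card J) + 1)" using lam[OF i] by (simp add: r_def)
      finally show "(a i)\<^sup>2 / lam i \<le> 1 / (real (card J) + 1)"
        using lam[OF i] by (simp add: divide_simps)
    qed
    also have "\<dots> < 1" by (simp add: divide_simps)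
    finally show "a \<in> ellipsoid J lam" using a by (auto simp: ellipsoid_def PiE_iff)
  qed
  have "emeasure (PiM J (\<lambda>_. lborel)) (\<Pi>\<^sub>E i\<in>J. {- r i<..<r i})
      = (\<Prod>i\<in>J. emeasure lborel {- r i<..<r i})"
    using J by (intro lborel_product.emeasure_PiM) auto
  also have "\<dots> = (\<Prod>i\<in>J. ennreal (2 * r i))"
    using r by (intro prod.cong refl) (subst emeasure_lborel_Ioo; force)
  also have "\<dots> = ennreal (\<Prod>i\<in>J. 2 * r i)"
    using r by (intro prod_ennreal) (auto intro: less_imp_le)
  also have "\<dots> > 0" using r by (simp add: prod_pos)
  finally show ?thesis using emeasure_mono[OF box ellipsoid_in_sets] by simp
qed

lemma emeasure_ellipsoid_finite:
  assumes J: "finite J" and lam: "\<And>i. i \<in> J \<Longrightarrow> lam i > 0"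
  shows "emeasure (PiM J (\<lambda>_. lborel)) (ellipsoid J lam) < \<infinity>"
proof -
  have box: "ellipsoid J lam \<subseteq> (\<Pi>\<^sub>E i\<in>J. {- sqrt (lam i)..sqrt (lam i)})"
  proof
    fix a assume a: "a \<in> ellipsoid J lam"
    have "a i \<in> {- sqrt (lam i)..sqrt (lam i)}" if i: "i \<in> J" for i
    proof -
      have "(a i)\<^sup>2 / lam i \<le> (\<Sum>i\<in>J. (a i)\<^sup>2 / lam i)"
        using J i lam by (intro member_le_sum) (auto intro!: divide_nonneg_pos)
      also have "\<dots> < 1" using a by (simp add: ellipsoid_def)
      finally have "(a i)\<^sup>2 < lam i" using lam[OF i] by (simp add: divide_simps)
      then have "\<bar>a i\<bar> \<le> sqrt (lam i)" using real_le_rsqrt by force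
      then show ?thesis by (simp add: abs_le_iff)
    qed
    then show "a \<in> (\<Pi>\<^sub>E i\<in>J. {- sqrt (lam i)..sqrt (lam i)})"
      using a by (auto simp: ellipsoid_def PiE_iff)
  qed
  have "emeasure (PiM J (\<lambda>_. lborel)) (\<Pi>\<^sub>E i\<in>J. {- sqrt (lam i)..sqrt (lam i)})
      = (\<Prod>i\<in>J. emeasure lborel {- sqrt (lam i)..sqrt (lam i)})"
    using J by (intro lborel_product.emeasure_PiM) auto
  also have "\<dots> < \<infinity>"
    by (simp add: ennreal_prod_eq_top less_top[symmetric] emeasure_lborel_Icc_eq)
  finally show ?thesis
    using emeasure_mono[OF box, of "PiM J (\<lambda>_. lborel)"] J
    by (auto intro: order.strict_trans1 sets_PiM_I_finite)
qed

lemma ellipsoid_covering_number_ge: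
  assumes J: "finite J" and lam: "\<And>i. i \<in> J \<Longrightarrow> lam i > 0" and t: "t > 0" and B: "finite B"
    and cover: "ellipsoid J lam \<subseteq> (\<Union>b\<in>B. {a \<in> \<Pi>\<^sub>E i\<in>J. UNIV. (\<Sum>i\<in>J. (a i - b i)\<^sup>2) < t})"
  shows "(\<Prod>i\<in>J. sqrt (lam i / t)) \<le> real (card B)"
proof -
  let ?P = "PiM J (\<lambda>_. lborel :: real measure)"
  define s where "s i = sqrt (lam i / t)" for i
  have s: "s i > 0" if "i \<in> J" for i using lam[OF that] t by (simp add: s_def)
  have s_prod: "(\<Prod>i\<in>J. s i) > 0" using s by (simp add: prod_pos)
  define ball where "ball b = {a \<in> \<Pi>\<^sub>E i\<in>J. UNIV. (\<Sum>i\<in>J. (a i - b i)\<^sup>2) < t}" for b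
  \<comment> \<open>each ball is the preimage of the ellipsoid under an affine map of determinant \<open>\<Prod>i\<in>J. s i\<close>\<close>
  have ball_vimage: "ball b = (\<lambda>a. \<lambda>i\<in>J. - b i * s i + s i * a i) -` ellipsoid J lam \<inter> space ?P" for b
  proof -
    have "(- b i * s i + s i * a i)\<^sup>2 / lam i = (a i - b i)\<^sup>2 / t" if i: "i \<in> J" for a i
    proof -
      have "(- b i * s i + s i * a i)\<^sup>2 = (s i)\<^sup>2 * (a i - b i)\<^sup>2" by (simp add: power2_eq_square algebra_simps)
      then show ?thesis using lam[OF i] t by (simp add: s_def)
    qed
    then have "(\<Sum>i\<in>J. (- b i * s i + s i * a i)\<^sup>2 / lam i) = (\<Sum>i\<in>J. (a i - b i)\<^sup>2) / t" for a
      by (simp add: sum_divide_distrib)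
    then show ?thesis using t
      by (auto simp: ball_def ellipsoid_def space_PiM PiE_iff restrict_def extensional_def)
  qed
  have ball_measure: "emeasure ?P (ball b) = ennreal (1 / (\<Prod>i\<in>J. s i)) * emeasure ?P (ellipsoid J lam)" for b
  proof -
    have "ennreal (1 / (\<Prod>i\<in>J. s i)) * ennreal (\<Prod>i\<in>J. s i) = 1"
      using s_prod by (simp flip: ennreal_mult)
    then show ?thesis
      unfolding ball_vimage
      by (simp flip: emeasure_PiM_affine_vimage[OF J s ellipsoid_in_sets, where u = "\<lambda>i. - b i * s i"]
          add: mult.assoc[symmetric])
  qed
  have ball_sets: "ball b \<in> sets ?P" for b
  proof -
    have "(\<lambda>a. \<lambda>i\<in>J. - b i * s i + s i * a i) \<in> ?P \<rightarrow>\<^sub>M ?P"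
      by (intro measurable_restrict) measurable
    then show ?thesis unfolding ball_vimage by (rule measurable_sets[OF _ ellipsoid_in_sets])
  qed
  have "ellipsoid J lam \<subseteq> (\<Union>b\<in>B. ball b)" using cover by (simp add: ball_def)
  then have "1 \<le> real (card B) * (1 / (\<Prod>i\<in>J. s i))"
    using ball_measure s_prod emeasure_ellipsoid_pos[OF J lam] emeasure_ellipsoid_finite[OF J lam]
    by (intro covering_number_ge_measure_ratio[OF B _ ball_sets]) auto
  then show ?thesis using s_prod by (simp add: s_def field_simps)
qed

locale orthonormal_family = finite_measure M for M :: "'a measure" +
  fixes \<phi> :: "nat \<Rightarrow> 'a \<Rightarrow> real"
  assumes phi_measurable: "\<phi> i \<in> borel_measurable M"
    and phi_square_integrable: "integrable M (\<lambda>x. (\<phi> i x)\<^sup>2)"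
    and phi_orthonormal: "(LINT x|M. \<phi> i x * \<phi> j x) = (if i = j then 1 else 0)"
begin

lemma integrable_phi_mult: "integrable M (\<lambda>x. \<phi> i x * \<phi> j x)"
proof (rule Bochner_Integration.integrable_bound)
  show "integrable M (\<lambda>x. (\<phi> i x)\<^sup>2 + (\<phi> j x)\<^sup>2)"
    using phi_square_integrable by simp
  show "(\<lambda>x. \<phi> i x * \<phi> j x) \<in> borel_measurable M"
    using phi_measurable by measurable
  have "norm (u * v) \<le> norm (u\<^sup>2 + v\<^sup>2)" for u v :: real
  proof -
    have "2 * \<bar>u\<bar> * \<bar>v\<bar> \<le> \<bar>u\<bar>\<^sup>2 + \<bar>v\<bar>\<^sup>2" by (rule sum_squares_bound)
    moreover have "0 \<le> \<bar>u\<bar> * \<bar>v\<bar>" by simp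
    ultimately have "\<bar>u * v\<bar> \<le> u\<^sup>2 + v\<^sup>2" by (simp only: abs_mult power2_abs)
    then show ?thesis by simp
  qed
  then show "AE x in M. norm (\<phi> i x * \<phi> j x) \<le> norm ((\<phi> i x)\<^sup>2 + (\<phi> j x)\<^sup>2)"
    by (rule AE_I2)
qed

lemma square_lincomb_eq: "(\<Sum>i<N. d i * \<phi> i x)\<^sup>2 = (\<Sum>i<N. \<Sum>j<N. d i * d j * (\<phi> i x * \<phi> j x))"
  by (simp add: power2_eq_square sum_product algebra_simps)

lemma integrable_square_lincomb: "integrable M (\<lambda>x. (\<Sum>i<N. d i * \<phi> i x)\<^sup>2)"
  unfolding square_lincomb_eq using integrable_phi_mult by simp

lemma integral_square_lincomb: "(LINT x|M. (\<Sum>i<N. d i * \<phi> i x)\<^sup>2) = (\<Sum>i<N. (d i)\<^sup>2)"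
  unfolding square_lincomb_eq using integrable_phi_mult
  by (simp add: phi_orthonormal power2_eq_square if_distrib sum.delta cong: if_cong)

lemma integral_lincomb_mult_phi:
  assumes "j < N"
  shows "(LINT x|M. (\<Sum>i<N. a i * \<phi> i x) * \<phi> j x) = a j"
proof -
  have "(LINT x|M. (\<Sum>i<N. a i * \<phi> i x) * \<phi> j x) = (\<Sum>i<N. a i * (LINT x|M. \<phi> i x * \<phi> j x))"
    using integrable_phi_mult by (simp add: sum_distrib_right mult.assoc)
  then show ?thesis using assms by (simp add: phi_orthonormal if_distrib cong: if_cong)
qed

lemma measure_space_pos: "0 < measure M (space M)"
proof (rule ccontr)
  assume "\<not> 0 < measure M (space M)"
  then have "space M \<in> null_sets M"
    by (simp add: emeasure_eq_measure null_setsI measure_nonneg order.antisym)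
  then have "(LINT x|M. \<phi> 0 x * \<phi> 0 x) = 0"
    by (intro integral_eq_zero_AE AE_I') auto
  then show False using phi_orthonormal[of 0 0] by simp
qed

lemma sum_square_coeffs_le_sup:
  assumes "\<And>x. x \<in> space M \<Longrightarrow> \<bar>\<Sum>i<N. d i * \<phi> i x\<bar> \<le> s"
  shows "(\<Sum>i<N. (d i)\<^sup>2) \<le> s\<^sup>2 * measure M (space M)"
proof -
  have "(\<Sum>i<N. (d i)\<^sup>2) = (LINT x|M. (\<Sum>i<N. d i * \<phi> i x)\<^sup>2)"
    by (rule integral_square_lincomb[symmetric])
  also have "\<dots> \<le> (LINT x|M. s\<^sup>2)"
  proof (rule integral_mono[OF integrable_square_lincomb])
    fix x assume "x \<in> space M"
    then have "\<bar>\<Sum>i<N. d i * \<phi> i x\<bar>\<^sup>2 \<le> s\<^sup>2" using assms by (intro power_mono) auto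
    then show "(\<Sum>i<N. d i * \<phi> i x)\<^sup>2 \<le> s\<^sup>2" by simp
  qed simp
  finally show ?thesis by (simp add: mult.commute)
qed

end

lemma sum_square_coeffs_less_sup:
  fixes M :: "'a::topological_space measure"
  assumes "orthonormal_family M \<phi>" and "compact (space M)" and "\<And>i. continuous_on (space M) (\<phi> i)"
    and sup: "(SUP x\<in>space M. \<bar>\<Sum>i<N. d i * \<phi> i x\<bar>) < \<epsilon>"
  shows "(\<Sum>i<N. (d i)\<^sup>2) < \<epsilon>\<^sup>2 * measure M (space M)"
proof -
  interpret orthonormal_family M \<phi> by fact
  let ?s = "SUP x\<in>space M. \<bar>\<Sum>i<N. d i * \<phi> i x\<bar>"
  have "continuous_on (space M) (\<lambda>x. \<bar>\<Sum>i<N. d i * \<phi> i x\<bar>)"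
    using assms(3) by (intro continuous_intros) auto
  then have "bdd_above ((\<lambda>x. \<bar>\<Sum>i<N. d i * \<phi> i x\<bar>) ` space M)"
    using assms(2) by (intro bounded_imp_bdd_above compact_imp_bounded compact_continuous_image)
  then have le_sup: "\<bar>\<Sum>i<N. d i * \<phi> i x\<bar> \<le> ?s" if "x \<in> space M" for x
    using that by (rule cSUP_upper2) simp
  obtain x0 where "x0 \<in> space M" using measure_space_pos by fastforce
  then have "0 \<le> ?s" using le_sup[of x0] by linarith
  have "(\<Sum>i<N. (d i)\<^sup>2) \<le> ?s\<^sup>2 * measure M (space M)"
    using le_sup by (rule sum_square_coeffs_le_sup)
  also have "\<dots> < \<epsilon>\<^sup>2 * measure M (space M)"
    using sup \<open>0 \<le> ?s\<close> measure_space_pos by (intro mult_strict_right_mono power_strict_mono) auto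
  finally show ?thesis .
qed

lemma proj_N_idem:
  assumes "orthonormal_family \<nu> \<phi>"
  shows "proj_N \<nu> \<phi> N (proj_N \<nu> \<phi> N f) = proj_N \<nu> \<phi> N f"
  by (simp add: proj_N_def orthonormal_family.integral_lincomb_mult_phi[OF assms])

lemma lincomb_in_proj_rkhs_ball:
  assumes "orthonormal_family \<nu> \<phi>" and "(\<Sum>i<N. (a i)\<^sup>2 / lam i) < 1"
  shows "(\<lambda>x. \<Sum>i<N. a i * \<phi> i x) \<in> proj_N \<nu> \<phi> N ` rkhs_ball \<phi> lam"
proof (rule image_eqI)
  define a' where "a' i = (if i < N then a i else 0)" for i
  have "summable (\<lambda>i. (a' i)\<^sup>2 / lam i)"
    by (rule summable_finite[of "{..<N}"]) (auto simp: a'_def)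
  moreover have "(\<Sum>i. (a' i)\<^sup>2 / lam i) < 1"
    using assms(2) by (subst suminf_finite[of "{..<N}"]) (auto simp: a'_def)
  moreover have "(\<lambda>x. \<Sum>i<N. a i * \<phi> i x) = (\<lambda>x. \<Sum>i. a' i * \<phi> i x)"
    by (rule ext, subst suminf_finite[of "{..<N}"]) (auto simp: a'_def)
  ultimately show "(\<lambda>x. \<Sum>i<N. a i * \<phi> i x) \<in> rkhs_ball \<phi> lam"
    unfolding rkhs_ball_def by blast
  show "(\<lambda>x. \<Sum>i<N. a i * \<phi> i x) = proj_N \<nu> \<phi> N (\<lambda>x. \<Sum>i<N. a i * \<phi> i x)"
    unfolding proj_N_def
    by (intro ext sum.cong refl) (simp add: orthonormal_family.integral_lincomb_mult_phi[OF assms(1)])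
qed

lemma standing_setting_space:
  assumes "standing_setting n \<Omega> \<nu> K \<phi> lam"
  shows "space \<nu> = \<Omega>"
proof -
  have "sets \<nu> = sets (restrict_space borel \<Omega>)"
    using assms by (simp add: standing_setting_def)
  then show ?thesis by (metis sets_eq_imp_space_eq space_restrict_space space_borel Int_UNIV_right)
qed

lemma standing_setting_orthonormal_family:
  assumes "standing_setting n \<Omega> \<nu> K \<phi> lam"
  shows "orthonormal_family \<nu> \<phi>"
  using assms unfolding standing_setting_def orthonormal_family_def orthonormal_family_axioms_def
  by blast

lemma eig_entropy_eq_sum_if:
  "eig_entropy \<delta> lam N = (\<Sum>i<N. if \<delta> < lam i then ln (lam i / \<delta>) else 0)"
  unfolding eig_entropy_def by (subst sum.inter_filter[symmetric]) (auto intro!: sum.cong)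

lemma eig_entropy_term_gain:
  fixes l L t \<delta> :: real
  assumes t: "0 < t" "t \<le> \<delta>" and l: "0 < l" "l \<le> L"
  shows "(if \<delta> < l then ln (l / \<delta>) else 0) + (min l \<delta> - t) / L \<le> (if t < l then ln (l / t) else 0)"
proof (cases "t < l")
  case True
  \<comment> \<open>split \<open>l / t = (l / m) * (m / t)\<close> and use \<open>ln (m / t) \<ge> 1 - t / m \<ge> (m - t) / L\<close>\<close>
  define m where "m = min l \<delta>"
  have m: "t \<le> m" "m \<le> L" "0 < m" using t l True by (auto simp: m_def)
  have "(m - t) / L \<le> (m - t) / m"
    using m by (intro divide_left_mono) auto
  also have "\<dots> \<le> ln (m / t)"
    using ln_le_minus_one[of "t / m"] m t by (simp add: ln_div field_simps)
  finally have gain: "(m - t) / L \<le> ln (m / t)" .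
  have "ln (l / t) = (if \<delta> < l then ln (l / \<delta>) else 0) + ln (m / t)"
    using t l by (auto simp: m_def ln_div)
  then show ?thesis using gain True by (simp add: m_def)
next
  case False
  then have "(min l \<delta> - t) / L \<le> 0" using l by (intro divide_nonpos_pos) auto
  then show ?thesis using False t by auto
qed

lemma eig_entropy_lower_threshold:
  fixes lam :: "nat \<Rightarrow> real"
  assumes lam_pos: "\<And>i. 0 < lam i" and lam_antimono: "\<And>i j. i \<le> j \<Longrightarrow> lam j \<le> lam i"
    and t: "0 < t" and D: "0 < D"
    and budget: "real N * t + lam 0 * D \<le> (\<Sum>i<N. min (lam i) \<delta>)"
  shows "eig_entropy \<delta> lam N + D \<le> eig_entropy t lam N"
proof -
  have "(\<Sum>i<N. min (lam i) \<delta>) \<le> real N * \<delta>"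
    using sum_mono[of "{..<N}" "\<lambda>i. min (lam i) \<delta>" "\<lambda>_. \<delta>"] by simp
  moreover have "0 < lam 0 * D" using lam_pos[of 0] D by simp
  ultimately have "real N * t < real N * \<delta>"
    using budget by linarith
  then have "t \<le> \<delta>" by (simp add: mult_less_cancel_left)
  have "D \<le> ((\<Sum>i<N. min (lam i) \<delta>) - real N * t) / lam 0"
    using budget lam_pos[of 0] by (simp add: field_simps)
  also have "\<dots> = (\<Sum>i<N. (min (lam i) \<delta> - t) / lam 0)"
    by (simp add: sum_divide_distrib[symmetric] sum_subtractf)
  finally have "eig_entropy \<delta> lam N + D
      \<le> (\<Sum>i<N. (if \<delta> < lam i then ln (lam i / \<delta>) else 0) + (min (lam i) \<delta> - t) / lam 0)"
    by (simp add: eig_entropy_eq_sum_if sum.distrib)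
  also have "\<dots> \<le> eig_entropy t lam N"
    unfolding eig_entropy_eq_sum_if
    using t \<open>t \<le> \<delta>\<close> lam_pos lam_antimono[of 0] by (intro sum_mono eig_entropy_term_gain) auto
  finally show ?thesis .
qed

lemma int_entropy_geI:
  assumes "\<And>C. finite C \<Longrightarrow> sup_cover \<Omega> \<epsilon> A C \<Longrightarrow> x \<le> ln (real (card C))"
  shows "ereal x \<le> int_entropy \<epsilon> A \<Omega>"
proof (cases "\<exists>C. finite C \<and> sup_cover \<Omega> \<epsilon> A C")
  case True
  then obtain C where C: "finite C" "sup_cover \<Omega> \<epsilon> A C"
    and minimal: "card C = (LEAST n. \<exists>C. finite C \<and> sup_cover \<Omega> \<epsilon> A C \<and> card C = n)"
    by (smt (verit) LeastI_ex)
  have "x \<le> ln (real (card C))" using assms C .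
  then show ?thesis using True by (simp add: int_entropy_def minimal)
qed (auto simp: int_entropy_def)

lemma standing_setting_measure_pos:
  assumes "standing_setting n \<Omega> \<nu> K \<phi> lam"
  shows "0 < measure \<nu> \<Omega>"
  using orthonormal_family.measure_space_pos[OF standing_setting_orthonormal_family[OF assms]]
  by (simp add: standing_setting_space[OF assms])

lemma ellipsoid_subset_sup_cover_coeff_balls:
  assumes S: "standing_setting n \<Omega> \<nu> K \<phi> lam" and J: "J \<subseteq> {..<N}"
    and cover: "sup_cover \<Omega> \<epsilon> (proj_N \<nu> \<phi> N ` rkhs_ball \<phi> lam) C"
  defines "coef \<equiv> \<lambda>c i. LINT y|\<nu>. c y * \<phi> i y"
  shows "ellipsoid J lam \<subseteq> (\<Union>b\<in>coef ` C.
           {a \<in> \<Pi>\<^sub>E i\<in>J. UNIV. (\<Sum>i\<in>J. (a i - b i)\<^sup>2) < \<epsilon>\<^sup>2 * measure \<nu> \<Omega>})"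
proof
  interpret orthonormal_family \<nu> \<phi> by (rule standing_setting_orthonormal_family[OF S])
  have \<Omega>: "space \<nu> = \<Omega>" by (rule standing_setting_space[OF S])
  fix a assume a: "a \<in> ellipsoid J lam"
  define a' where "a' i = (if i \<in> J then a i else 0)" for i
  have "(\<Sum>i<N. (a' i)\<^sup>2 / lam i) = (\<Sum>i\<in>J. (a' i)\<^sup>2 / lam i)"
    using J by (intro sum.mono_neutral_right) (auto simp: a'_def)
  also have "\<dots> < 1" using a by (simp add: ellipsoid_def a'_def)
  finally have "(\<lambda>x. \<Sum>i<N. a' i * \<phi> i x) \<in> proj_N \<nu> \<phi> N ` rkhs_ball \<phi> lam"
    by (rule lincomb_in_proj_rkhs_ball[OF orthonormal_family_axioms])
  then obtain c where c: "c \<in> C" and close: "(SUP x\<in>\<Omega>. \<bar>(\<Sum>i<N. a' i * \<phi> i x) - c x\<bar>) < \<epsilon>"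
    using cover by (auto simp: sup_cover_def)
  have "c \<in> proj_N \<nu> \<phi> N ` rkhs_ball \<phi> lam" using c cover by (auto simp: sup_cover_def)
  then have "proj_N \<nu> \<phi> N c = c" using proj_N_idem[OF orthonormal_family_axioms] by auto
  then have c_expansion: "c x = (\<Sum>i<N. coef c i * \<phi> i x)" for x
    unfolding coef_def by (metis proj_N_def)
  have "(\<Sum>i<N. a' i * \<phi> i x) - c x = (\<Sum>i<N. (a' i - coef c i) * \<phi> i x)" for x
    by (simp add: c_expansion left_diff_distrib sum_subtractf)
  then have "(SUP x\<in>space \<nu>. \<bar>\<Sum>i<N. (a' i - coef c i) * \<phi> i x\<bar>) < \<epsilon>"
    using close by (simp only: \<Omega>)
  moreover have "compact (space \<nu>)" "\<And>i. continuous_on (space \<nu>) (\<phi> i)"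
    using S by (auto simp: \<Omega> standing_setting_def)
  ultimately have l2: "(\<Sum>i<N. (a' i - coef c i)\<^sup>2) < \<epsilon>\<^sup>2 * measure \<nu> \<Omega>"
    using sum_square_coeffs_less_sup[OF orthonormal_family_axioms] by (simp only: \<Omega>)
  have "(\<Sum>i\<in>J. (a i - coef c i)\<^sup>2) = (\<Sum>i\<in>J. (a' i - coef c i)\<^sup>2)"
    by (simp add: a'_def)
  also have "\<dots> \<le> (\<Sum>i<N. (a' i - coef c i)\<^sup>2)"
    using J by (intro sum_mono2) auto
  finally have "(\<Sum>i\<in>J. (a i - coef c i)\<^sup>2) < \<epsilon>\<^sup>2 * measure \<nu> \<Omega>"
    using l2 by linarith
  then show "a \<in> (\<Union>b\<in>coef ` C.
      {a \<in> \<Pi>\<^sub>E i\<in>J. UNIV. (\<Sum>i\<in>J. (a i - b i)\<^sup>2) < \<epsilon>\<^sup>2 * measure \<nu> \<Omega>})"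
    using a c by (auto simp: ellipsoid_def)
qed

lemma eig_entropy_le_ln_card_sup_cover:
  assumes S: "standing_setting n \<Omega> \<nu> K \<phi> lam" and \<epsilon>: "0 < \<epsilon>"
    and C: "finite C" and cover: "sup_cover \<Omega> \<epsilon> (proj_N \<nu> \<phi> N ` rkhs_ball \<phi> lam) C"
  shows "eig_entropy (\<epsilon>\<^sup>2 * measure \<nu> \<Omega>) lam N / 2 \<le> ln (real (card C))"
proof -
  define t where "t = \<epsilon>\<^sup>2 * measure \<nu> \<Omega>"
  define J where "J = {i. i < N \<and> t < lam i}"
  have lam: "0 < lam i" for i using S by (simp add: standing_setting_def)
  then have "lam i \<noteq> 0" for i by (metis less_irrefl)
  have t: "0 < t" using \<epsilon> standing_setting_measure_pos[OF S] by (simp add: t_def)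
  have J: "J \<subseteq> {..<N}" "finite J" by (auto simp: J_def)
  have "(\<Prod>i\<in>J. sqrt (lam i / t)) \<le> real (card ((\<lambda>c i. LINT y|\<nu>. c y * \<phi> i y) ` C))"
    using ellipsoid_subset_sup_cover_coeff_balls[OF S J(1) cover] lam t C
    by (intro ellipsoid_covering_number_ge[OF J(2)]) (auto simp: t_def)
  also have "\<dots> \<le> real (card C)" using card_image_le[OF C] by simp
  finally have "ln (\<Prod>i\<in>J. sqrt (lam i / t)) \<le> ln (real (card C))"
    using lam t by (intro ln_mono prod_pos) auto
  moreover have "ln (\<Prod>i\<in>J. sqrt (lam i / t)) = (\<Sum>i\<in>J. ln (lam i / t)) / 2"
    using lam \<open>\<And>i. lam i \<noteq> 0\<close> t J(2)
    by (subst ln_prod) (auto simp: ln_sqrt less_imp_le sum_divide_distrib)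
  ultimately show ?thesis by (simp add: t_def J_def eig_entropy_def)
qed

theorem lemma14:
  shows "\<exists>C>0. \<forall>n \<Omega> \<nu> K \<phi> lam. standing_setting n \<Omega> \<nu> K \<phi> lam \<longrightarrow>
    (\<forall>(N::nat) (\<epsilon>::real). \<epsilon> > 0 \<longrightarrow>
      (SUP p\<in>{(D::real, \<delta>::real). D > 0 \<and> \<delta> > 0 \<and>
              (sqrt (measure \<nu> \<Omega>) * sqrt (real N) * \<epsilon> + sqrt (lam 0) * sqrt D)\<^sup>2
                \<le> (\<Sum>i<N. min (lam i) \<delta>)}.
         ereal (eig_entropy (snd p) lam N / 2 - C * ln (1 / fst p)))
      \<le> int_entropy \<epsilon> (proj_N \<nu> \<phi> N ` rkhs_ball \<phi> lam) \<Omega>)"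
proof (intro exI[of _ "1/2"] conjI allI impI SUP_least, goal_cases)
  case (2 n \<Omega> \<nu> K \<phi> lam N \<epsilon> p)
  then have S: "standing_setting n \<Omega> \<nu> K \<phi> lam" and \<epsilon>: "0 < \<epsilon>" by auto
  have lam: "\<And>i. 0 < lam i" "\<And>i j. i \<le> j \<Longrightarrow> lam j \<le> lam i"
    using S by (auto simp: standing_setting_def)
  have \<nu>: "0 < measure \<nu> \<Omega>" by (rule standing_setting_measure_pos[OF S])
  obtain D \<delta> where p: "p = (D, \<delta>)" and D: "0 < D"
    and budget: "(sqrt (measure \<nu> \<Omega>) * sqrt (real N) * \<epsilon> + sqrt (lam 0) * sqrt D)\<^sup>2
      \<le> (\<Sum>i<N. min (lam i) \<delta>)"
    using 2 by auto
  have "real N * (\<epsilon>\<^sup>2 * measure \<nu> \<Omega>) + lam 0 * D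
      \<le> (sqrt (measure \<nu> \<Omega>) * sqrt (real N) * \<epsilon> + sqrt (lam 0) * sqrt D)\<^sup>2"
    using \<epsilon> D lam(1)[of 0] \<nu> by (simp add: power2_sum power_mult_distrib)
  then have "eig_entropy \<delta> lam N + D \<le> eig_entropy (\<epsilon>\<^sup>2 * measure \<nu> \<Omega>) lam N"
    using budget \<epsilon> D lam \<nu> by (intro eig_entropy_lower_threshold) auto
  moreover have "- ln (1 / D) \<le> D" using ln_le_minus_one[OF D] D by (simp add: ln_div)
  ultimately show ?case
    using eig_entropy_le_ln_card_sup_cover[OF S \<epsilon>] unfolding p
    by (intro int_entropy_geI) force
qed simp

end
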